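(* Let $q$ satisfy condition $\mathbf{A}$ for $x\ge x_0$ (for some $x_0\ge 0$). Then the set $\mathscr{N}$ is a non-empty open subset of $\mathbb{C}$ (indeed $0\in\mathscr{N}$). Moreover, $\mathscr{N}=\mathbb{C}$ if and only if $|q(x)|\to+\infty$ as $x\to+\infty$.
   Context: $\mathbb{R}_+=[0,+\infty)$. For $\kappa\ge 0$ let $\Pi_\kappa=\{z\in\mathbb{C}: z\neq 0,\ \arg z\in(-\pi+\kappa,\pi-\kappa)\}$. A complex-valued function $q$ on $\mathbb{R}_+$ is said to satisfy condition $\mathbf{A}$ for $x\ge x_0$ if: (i) $q\in L_{1,loc}(\mathbb{R}_+)$ and $q$ is locally absolutely continuous on $[x_0,+\infty)$; (ii) $q([x_0,+\infty))\subset\Pi_\kappa$ for some $\kappa\ge0$; (iii) there is a constant $C>0$ such that for a.e. $x\ge x_0$, $$\operatorname{Re}p(x)\ge C+\frac12\Bigl|\frac{p'(x)}{p(x)}\Bigr|,$$ where $p(x)=\sqrt{q(x)}$ with the branch chosen so that $\operatorname{Re}p(x)>0$ for $x\ge x_0$. The set $\mathscr{N}$ is the set of those $\lambda\in\mathbb{C}$ for which $q_\lambda=q-\lambda$ satisfies condition $\mathbf{A}$ for $x\ge x_0(\lambda)$ for some $x_0(\lambda)\ge0$ (depending on $\lambda$). *)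

theory Defs
  imports "HOL-Analysis.Analysis"
begin

definition abs_cont_on_interval :: "(real \<Rightarrow> 'b::real_normed_vector) \<Rightarrow> real \<Rightarrow> real \<Rightarrow> bool" where
  "abs_cont_on_interval f a b \<longleftrightarrow>
     (\<forall>\<epsilon>>0. \<exists>\<delta>>0. \<forall>(n::nat) (s::nat \<Rightarrow> real) (t::nat \<Rightarrow> real).
        (\<forall>i<n. a \<le> s i \<and> s i \<le> t i \<and> t i \<le> b) \<and>
        (\<forall>i<n. \<forall>j<n. i \<noteq> j \<longrightarrow> {s i<..<t i} \<inter> {s j<..<t j} = {}) \<and>
        (\<Sum>i<n. t i - s i) < \<delta>
        \<longrightarrow> (\<Sum>i<n. norm (f (t i) - f (s i))) < \<epsilon>)"

definition loc_abs_cont_from :: "(real \<Rightarrow> 'b::real_normed_vector) \<Rightarrow> real \<Rightarrow> bool" where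
  "loc_abs_cont_from f x0 \<longleftrightarrow> (\<forall>b\<ge>x0. abs_cont_on_interval f x0 b)"

definition loc_integrable_Rplus :: "(real \<Rightarrow> complex) \<Rightarrow> bool" where
  "loc_integrable_Rplus f \<longleftrightarrow> (\<forall>b\<ge>0. set_integrable lborel {0..b} f)"

text \<open>The sector Pi_kappa = {z /= 0, arg z in (-pi+kappa, pi-kappa)}; Arg has range (-pi,pi].\<close>
definition sector :: "real \<Rightarrow> complex set" where
  "sector \<kappa> = {z. z \<noteq> 0 \<and> -pi + \<kappa> < Arg z \<and> Arg z < pi - \<kappa>}"

text \<open>Condition A for x >= x0. The branch p = sqrt q with Re p > 0 is csqrt (principal root),
which has positive real part on every sector Pi_kappa.\<close>
definition condA :: "(real \<Rightarrow> complex) \<Rightarrow> real \<Rightarrow> bool" where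
  "condA q x0 \<longleftrightarrow>
     loc_integrable_Rplus q \<and>
     loc_abs_cont_from q x0 \<and>
     (\<exists>\<kappa>\<ge>0. \<forall>x\<ge>x0. q x \<in> sector \<kappa>) \<and>
     (\<exists>C>0. AE x in lborel. x \<ge> x0 \<longrightarrow>
        (\<exists>dp. ((\<lambda>t. csqrt (q t)) has_vector_derivative dp) (at x) \<and>
             Re (csqrt (q x)) \<ge> C + 1/2 * cmod (dp / csqrt (q x))))"

definition setN :: "(real \<Rightarrow> complex) \<Rightarrow> complex set" where
  "setN q = {l. \<exists>x0\<ge>0. condA (\<lambda>x. q x - l) x0}"

end

theory Submission
  imports Defs
begin

text \<open>Write r(x) = sqrt(q(x) - l). By continuity the almost-everywhere bound Re r \<ge> C holds at
every x \<ge> x0. If 10 |m - l| \<le> C |r(x)|, then sqrt(q(x) - m) differs from r(x) by at most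
|m - l| / |r(x)|, and condition A survives the shift from l to m with constant C/2. As |r| \<ge> C,
this puts the disc of radius C^2/10 around l inside N, and all of the plane into N when
|q| \<rightarrow> \<infinity>. Conversely every l in N keeps q(x) at distance at least C^2 from l for large x;
if N is the whole plane, finitely many such discs cover any closed disc around 0, so |q(x)|
eventually leaves it.\<close>

definition Re_sqrt_bound :: "(real \<Rightarrow> complex) \<Rightarrow> real \<Rightarrow> real \<Rightarrow> bool" where
  "Re_sqrt_bound g x0 C \<longleftrightarrow>
     (AE x in lborel. x \<ge> x0 \<longrightarrow>
        (\<exists>dp. ((\<lambda>t. csqrt (g t)) has_vector_derivative dp) (at x) \<and>
             Re (csqrt (g x)) \<ge> C + 1/2 * cmod (dp / csqrt (g x))))"

lemma condA_altdef:
  "condA g x0 \<longleftrightarrow> loc_integrable_Rplus g \<and> loc_abs_cont_from g x0 \<and>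
     (\<exists>\<kappa>\<ge>0. \<forall>x\<ge>x0. g x \<in> sector \<kappa>) \<and> (\<exists>C>0. Re_sqrt_bound g x0 C)"
  unfolding condA_def Re_sqrt_bound_def ..

lemma loc_integrable_Rplus_diff_const:
  assumes "loc_integrable_Rplus f"
  shows "loc_integrable_Rplus (\<lambda>x. f x - c)"
proof -
  have "set_integrable lborel {0..b} (\<lambda>_. c)" for b :: real
    unfolding set_integrable_def
    by (rule integrable_indicator) (auto simp: emeasure_lborel_Icc_eq)
  then show ?thesis
    using assms unfolding loc_integrable_Rplus_def by (auto intro: set_integral_diff(1))
qed

lemma abs_cont_on_interval_subinterval:
  assumes "abs_cont_on_interval f a b" "a \<le> a'" "b' \<le> b"
  shows "abs_cont_on_interval f a' b'"
  unfolding abs_cont_on_interval_def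
proof (intro allI impI)
  fix \<epsilon> :: real
  assume "0 < \<epsilon>"
  with assms(1) obtain \<delta> where "0 < \<delta>" and small: "\<forall>(n::nat) s t.
      (\<forall>i<n. a \<le> s i \<and> s i \<le> t i \<and> t i \<le> b) \<and>
      (\<forall>i<n. \<forall>j<n. i \<noteq> j \<longrightarrow> {s i<..<t i} \<inter> {s j<..<t j} = {}) \<and>
      (\<Sum>i<n. t i - s i) < \<delta> \<longrightarrow> (\<Sum>i<n. norm (f (t i) - f (s i))) < \<epsilon>"
    unfolding abs_cont_on_interval_def by blast
  show "\<exists>\<delta>>0. \<forall>(n::nat) s t.
      (\<forall>i<n. a' \<le> s i \<and> s i \<le> t i \<and> t i \<le> b') \<and>
      (\<forall>i<n. \<forall>j<n. i \<noteq> j \<longrightarrow> {s i<..<t i} \<inter> {s j<..<t j} = {}) \<and>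
      (\<Sum>i<n. t i - s i) < \<delta> \<longrightarrow> (\<Sum>i<n. norm (f (t i) - f (s i))) < \<epsilon>"
  proof (intro exI[of _ \<delta>] conjI allI impI)
    fix n :: nat and s t :: "nat \<Rightarrow> real"
    assume "(\<forall>i<n. a' \<le> s i \<and> s i \<le> t i \<and> t i \<le> b') \<and>
      (\<forall>i<n. \<forall>j<n. i \<noteq> j \<longrightarrow> {s i<..<t i} \<inter> {s j<..<t j} = {}) \<and>
      (\<Sum>i<n. t i - s i) < \<delta>"
    then have "(\<forall>i<n. a \<le> s i \<and> s i \<le> t i \<and> t i \<le> b) \<and>
      (\<forall>i<n. \<forall>j<n. i \<noteq> j \<longrightarrow> {s i<..<t i} \<inter> {s j<..<t j} = {}) \<and>
      (\<Sum>i<n. t i - s i) < \<delta>"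
      using assms(2,3) by (meson order_trans)
    then show "(\<Sum>i<n. norm (f (t i) - f (s i))) < \<epsilon>"
      by (rule small[rule_format])
  qed (rule \<open>0 < \<delta>\<close>)
qed

lemma abs_cont_on_interval_diff_const [simp]:
  "abs_cont_on_interval (\<lambda>x. f x - c) a b \<longleftrightarrow> abs_cont_on_interval f a b"
  by (simp add: abs_cont_on_interval_def)

lemma loc_abs_cont_from_diff_const:
  assumes "loc_abs_cont_from f x0" "x0 \<le> x1"
  shows "loc_abs_cont_from (\<lambda>x. f x - c) x1"
  unfolding loc_abs_cont_from_def abs_cont_on_interval_diff_const
proof (intro allI impI)
  fix b
  assume "x1 \<le> b"
  with assms show "abs_cont_on_interval f x1 b"
    unfolding loc_abs_cont_from_def by (auto intro: abs_cont_on_interval_subinterval[of f x0 b])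
qed

lemma abs_cont_on_interval_imp_continuous_on:
  assumes "abs_cont_on_interval f a b"
  shows "continuous_on {a..b} f"
  unfolding continuous_on_iff
proof (intro ballI allI impI)
  fix y e :: real
  assume "y \<in> {a..b}" "0 < e"
  from assms \<open>0 < e\<close> obtain d where "0 < d" and small: "\<forall>(n::nat) s t.
      (\<forall>i<n. a \<le> s i \<and> s i \<le> t i \<and> t i \<le> b) \<and>
      (\<forall>i<n. \<forall>j<n. i \<noteq> j \<longrightarrow> {s i<..<t i} \<inter> {s j<..<t j} = {}) \<and>
      (\<Sum>i<n. t i - s i) < d \<longrightarrow> (\<Sum>i<n. norm (f (t i) - f (s i))) < e"
    unfolding abs_cont_on_interval_def by blast
  have close: "norm (f v - f u) < e" if "a \<le> u" "u \<le> v" "v \<le> b" "v - u < d" for u v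
    using small[rule_format, of 1 "\<lambda>_. u" "\<lambda>_. v"] that by simp
  have "dist (f z) (f y) < e" if "z \<in> {a..b}" "dist z y < d" for z
    using close[of y z] close[of z y] \<open>y \<in> {a..b}\<close> that
    by (cases "y \<le> z") (auto simp: dist_norm dist_real_def norm_minus_commute)
  with \<open>0 < d\<close> show "\<exists>d>0. \<forall>z\<in>{a..b}. dist z y < d \<longrightarrow> dist (f z) (f y) < e"
    by blast
qed

lemma AE_lborel_imp_frequently_at_right:
  fixes x :: real
  assumes "AE y in lborel. P y"
  shows "frequently P (at_right x)"
  unfolding frequently_def
proof
  assume "eventually (\<lambda>y. \<not> P y) (at_right x)"
  then obtain b where "x < b" and bad: "\<And>y. x < y \<Longrightarrow> y < b \<Longrightarrow> \<not> P y"
    unfolding eventually_at_right_field by blast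
  obtain N where N: "{y \<in> space lborel. \<not> P y} \<subseteq> N" "emeasure lborel N = 0" "N \<in> sets lborel"
    using assms by (auto elim!: AE_E)
  have "emeasure lborel {x<..<b} \<le> emeasure lborel N"
    using bad N by (intro emeasure_mono) auto
  with \<open>x < b\<close> N(2) show False
    by simp
qed

lemma Re_csqrt_ge_if_Re_sqrt_bound:
  assumes "loc_abs_cont_from g x0" "Re_sqrt_bound g x0 C" "x0 \<le> x"
  shows "C \<le> Re (csqrt (g x))"
proof (rule ccontr)
  assume "\<not> C \<le> Re (csqrt (g x))"
  have "abs_cont_on_interval g x (x + 1)"
    using assms(1,3) abs_cont_on_interval_subinterval[of g x0 "x + 1" x "x + 1"]
    unfolding loc_abs_cont_from_def by simp
  then have "continuous_on {x..x+1} g"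
    by (rule abs_cont_on_interval_imp_continuous_on)
  then have "continuous_on {x..x+1} (\<lambda>y. Re (csqrt (g y)))"
    by (auto intro!: continuous_intros)
  then have "((\<lambda>y. Re (csqrt (g y))) \<longlongrightarrow> Re (csqrt (g x))) (at_right x)"
    by (rule continuous_on_Icc_at_rightD) simp
  then have "eventually (\<lambda>y. Re (csqrt (g y)) < C) (at_right x)"
    using \<open>\<not> C \<le> Re (csqrt (g x))\<close> by (simp add: order_tendsto_iff)
  then have "eventually (\<lambda>y. \<not> (x0 \<le> y \<longrightarrow> C \<le> Re (csqrt (g y)))) (at_right x)"
    using eventually_at_right_less[of x] by eventually_elim (use \<open>x0 \<le> x\<close> in auto)
  moreover have "AE y in lborel. x0 \<le> y \<longrightarrow> C \<le> Re (csqrt (g y))"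
    using assms(2) unfolding Re_sqrt_bound_def
  proof eventually_elim
    case (elim y)
    show ?case
    proof
      assume "x0 \<le> y"
      with elim obtain dp where "C + 1/2 * cmod (dp / csqrt (g y)) \<le> Re (csqrt (g y))"
        by blast
      then show "C \<le> Re (csqrt (g y))"
        using norm_ge_zero[of "dp / csqrt (g y)"] by linarith
    qed
  qed
  then have "frequently (\<lambda>y. x0 \<le> y \<longrightarrow> C \<le> Re (csqrt (g y))) (at_right x)"
    by (rule AE_lborel_imp_frequently_at_right)
  ultimately show False
    by (simp add: frequently_def)
qed

lemma condA_obtains_bound:
  assumes "condA g x0"
  obtains C where "0 < C" "Re_sqrt_bound g x0 C" "\<And>x. x0 \<le> x \<Longrightarrow> C \<le> Re (csqrt (g x))"
  using assms Re_csqrt_ge_if_Re_sqrt_bound unfolding condA_altdef by blast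

lemma cmod_diff_sqrt_perturbation:
  fixes s s' \<nu> :: complex
  assumes sq: "s'^2 = s^2 - \<nu>" and "0 < C" "C \<le> Re (s + s')"
    and small: "10 * cmod \<nu> \<le> C * cmod s"
  shows "cmod (s - s') * cmod s \<le> cmod \<nu>" "10 * cmod (s - s') \<le> cmod s"
proof -
  have "(s - s') * (s + s') = \<nu>"
    using sq by (simp add: algebra_simps power2_eq_square)
  then have prod: "cmod (s - s') * cmod (s + s') = cmod \<nu>"
    by (metis norm_mult)
  have "C \<le> cmod (s + s')"
    using \<open>C \<le> Re (s + s')\<close> complex_Re_le_cmod order_trans by blast
  then have "cmod (s - s') * C \<le> cmod \<nu>"
    using prod by (metis mult_left_mono norm_ge_zero)
  with small have "C * (10 * cmod (s - s')) \<le> C * cmod s"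
    by (simp add: algebra_simps)
  with \<open>0 < C\<close> show close: "10 * cmod (s - s') \<le> cmod s"
    by (simp add: mult_le_cancel_left_pos)
  have "cmod (2 * s) \<le> cmod (s + s') + cmod (s - s')"
    using norm_triangle_ineq[of "s + s'" "s - s'"] by simp
  then have "2 * cmod s \<le> cmod (s + s') + cmod (s - s')"
    by (simp add: norm_mult)
  with close norm_ge_zero[of s] have "cmod s \<le> cmod (s + s')"
    by linarith
  then show "cmod (s - s') * cmod s \<le> cmod \<nu>"
    using prod by (metis mult_left_mono norm_ge_zero)
qed

lemma Re_csqrt_diff_ge:
  fixes s \<nu> :: complex and C D :: real
  assumes "0 < C" "0 \<le> D" "C + D \<le> Re s" and small: "10 * cmod \<nu> \<le> C * cmod s"
  shows "C/2 + D * (cmod s / cmod (csqrt (s^2 - \<nu>)))^2 \<le> Re (csqrt (s^2 - \<nu>))"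
proof -
  define s' where "s' = csqrt (s^2 - \<nu>)"
  define a b e n where "a = cmod s" and "b = cmod s'" and "e = cmod (s - s')" and "n = cmod \<nu>"
  have "C + D \<le> a"
    using assms(3) complex_Re_le_cmod[of s] unfolding a_def by linarith
  with assms(1,2) have "0 < a"
    by linarith
  have "C \<le> Re (s + s')"
    using assms(2,3) Re_csqrt[of "s^2 - \<nu>", folded s'_def] by simp
  then have ea: "e * a \<le> n" and "10 * e \<le> a"
    using cmod_diff_sqrt_perturbation[of s' s \<nu> C] small assms(1)
    unfolding s'_def a_def e_def n_def by auto
  have "n \<le> C * a / 10"
    using small unfolding n_def a_def by simp
  have "e * a \<le> C / 10 * a"
    using ea \<open>n \<le> C * a / 10\<close> by simp
  then have "e \<le> C / 10"
    using \<open>0 < a\<close> by simp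
  have "Re (s - s') \<le> e"
    unfolding e_def by (rule complex_Re_le_cmod)
  then have Re_s': "Re s - e \<le> Re s'"
    by simp
  have "a \<le> b + e"
    unfolding a_def b_def e_def using norm_triangle_ineq[of "s - s'" s'] by simp
  with \<open>10 * e \<le> a\<close> have "9/10 * a \<le> b"
    by linarith
  then have "(9/10 * a)^2 \<le> b^2"
    using \<open>0 < a\<close> by (intro power_mono) auto
  then have "81/100 * a^2 \<le> b^2"
    by (simp add: power2_eq_square)
  have "a^2 = cmod (s'^2 + \<nu>)"
    unfolding a_def s'_def by (simp add: norm_power)
  also have "\<dots> \<le> b^2 + n"
    unfolding b_def n_def using norm_triangle_ineq[of "s'^2" \<nu>] by (simp add: norm_power)
  finally have "a^2 \<le> b^2 + n" .
  have "0 < b"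
    using \<open>9/10 * a \<le> b\<close> \<open>0 < a\<close> by linarith
  have "D * (a / b)^2 \<le> D * ((b^2 + n) / b^2)"
    using \<open>a^2 \<le> b^2 + n\<close> \<open>0 < b\<close> assms(2)
    by (intro mult_left_mono) (auto simp: power_divide divide_right_mono)
  also have "\<dots> = D + D * n / b^2"
    using \<open>0 < b\<close> by (simp add: field_simps)
  also have "D * n / b^2 \<le> a * n / (81/100 * a^2)"
    using \<open>C + D \<le> a\<close> assms(1) \<open>81/100 * a^2 \<le> b^2\<close> \<open>0 < a\<close> unfolding n_def
    by (intro frac_le mult_right_mono) auto
  also have "a * n / (81/100 * a^2) = 100/81 * (n / a)"
    using \<open>0 < a\<close> by (simp add: field_simps power2_eq_square)
  also have "n / a \<le> C / 10"
    using \<open>n \<le> C * a / 10\<close> \<open>0 < a\<close> by (simp add: divide_le_eq mult.commute)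
  finally have "D * (a / b)^2 \<le> D + 100/81 * (C / 10)"
    by simp
  \<comment> \<open>closes because 1/2 + 10/81 < 9/10\<close>
  with Re_s' \<open>e \<le> C / 10\<close> assms(1,3) show ?thesis
    unfolding a_def b_def s'_def by linarith
qed

lemma not_nonpos_Reals_if_Re_csqrt_pos: "0 < Re (csqrt z) \<Longrightarrow> z \<notin> \<real>\<^sub>\<le>\<^sub>0"
  by (auto simp: nonpos_Reals_def)

lemma sector_0_if_Re_csqrt_pos:
  assumes "0 < Re (csqrt z)"
  shows "z \<in> sector 0"
proof -
  have "z \<noteq> 0"
    using assms by auto
  moreover have "Arg z \<noteq> pi"
  proof
    assume "Arg z = pi"
    then have "Re z < 0" "Im z = 0"
      using Arg_eq_pi by auto
    with assms show False
      by simp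
  qed
  ultimately show ?thesis
    using Arg_bounded[of z] unfolding sector_def by auto
qed

text \<open>g need not be differentiable: g - \<nu> is differentiated as (csqrt g)^2 - \<nu>.\<close>

lemma has_vector_derivative_csqrt_diff:
  fixes g :: "real \<Rightarrow> complex"
  assumes deriv: "((\<lambda>t. csqrt (g t)) has_vector_derivative dp) (at x)"
    and pos: "0 < Re (csqrt (g x - \<nu>))"
  shows "((\<lambda>t. csqrt (g t - \<nu>)) has_vector_derivative
           csqrt (g x) * dp / csqrt (g x - \<nu>)) (at x)"
proof -
  have inner: "((\<lambda>t. (csqrt (g t))^2 - \<nu>) has_vector_derivative 2 * csqrt (g x) * dp) (at x)"
    using deriv by (auto intro!: derivative_eq_intros simp: power2_eq_square)
  have outer: "(csqrt has_field_derivative inverse (2 * csqrt (g x - \<nu>)))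
      (at ((\<lambda>t. (csqrt (g t))^2 - \<nu>) x))"
    using has_field_derivative_csqrt[OF not_nonpos_Reals_if_Re_csqrt_pos[OF pos]] by simp
  have "((csqrt \<circ> (\<lambda>t. (csqrt (g t))^2 - \<nu>)) has_vector_derivative
      2 * csqrt (g x) * dp * inverse (2 * csqrt (g x - \<nu>))) (at x)"
    by (rule field_vector_diff_chain_at[OF inner outer])
  then show ?thesis
    by (simp add: o_def field_simps)
qed

lemma Re_sqrt_bound_diff_const_at:
  fixes g :: "real \<Rightarrow> complex"
  assumes deriv: "((\<lambda>t. csqrt (g t)) has_vector_derivative dp) (at x)"
    and bound: "C + 1/2 * cmod (dp / csqrt (g x)) \<le> Re (csqrt (g x))"
    and "0 < C" and small: "10 * cmod \<nu> \<le> C * cmod (csqrt (g x))"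
  shows "\<exists>dp'. ((\<lambda>t. csqrt (g t - \<nu>)) has_vector_derivative dp') (at x) \<and>
           C/2 + 1/2 * cmod (dp' / csqrt (g x - \<nu>)) \<le> Re (csqrt (g x - \<nu>))"
proof -
  define s s' D where "s = csqrt (g x)" and "s' = csqrt (g x - \<nu>)"
    and "D = 1/2 * cmod (dp / s)"
  have "C/2 + D * (cmod s / cmod s')^2 \<le> Re s'"
    using Re_csqrt_diff_ge[of C D s \<nu>] bound small \<open>0 < C\<close>
    unfolding s_def s'_def D_def by simp
  moreover have "0 \<le> D * (cmod s / cmod s')^2"
    unfolding D_def by simp
  ultimately have "0 < Re s'"
    using \<open>0 < C\<close> by linarith
  moreover have "s \<noteq> 0"
    using bound \<open>0 < C\<close> unfolding s_def by (auto simp: not_le)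
  ultimately have "1/2 * cmod (s * dp / s' / s') = D * (cmod s / cmod s')^2"
    unfolding D_def by (auto simp: norm_mult norm_divide power2_eq_square field_simps)
  with \<open>C/2 + D * (cmod s / cmod s')^2 \<le> Re s'\<close> \<open>0 < Re s'\<close> show ?thesis
    using has_vector_derivative_csqrt_diff[OF deriv, of \<nu>]
    unfolding s_def s'_def by (intro exI[of _ "csqrt (g x) * dp / csqrt (g x - \<nu>)"]) auto
qed

lemma condA_diff_const:
  assumes A: "condA g x0" and bound: "Re_sqrt_bound g x0 C" and "0 < C" and "x0 \<le> x1"
    and small: "\<And>x. x1 \<le> x \<Longrightarrow> 10 * cmod \<nu> \<le> C * cmod (csqrt (g x))"
  shows "condA (\<lambda>x. g x - \<nu>) x1"
proof -
  have "loc_integrable_Rplus g" "loc_abs_cont_from g x0"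
    using A unfolding condA_altdef by auto
  have "g x - \<nu> \<in> sector 0" if "x1 \<le> x" for x
  proof -
    have "C \<le> Re (csqrt (g x))"
      using Re_csqrt_ge_if_Re_sqrt_bound[OF \<open>loc_abs_cont_from g x0\<close> bound] \<open>x0 \<le> x1\<close> that
      by simp
    then have "C/2 + 0 * (cmod (csqrt (g x)) / cmod (csqrt (g x - \<nu>)))^2 \<le> Re (csqrt (g x - \<nu>))"
      using Re_csqrt_diff_ge[of C 0 "csqrt (g x)" \<nu>] \<open>0 < C\<close> small[OF that] by simp
    with \<open>0 < C\<close> have "0 < Re (csqrt (g x - \<nu>))"
      by linarith
    then show ?thesis
      by (rule sector_0_if_Re_csqrt_pos)
  qed
  moreover have "Re_sqrt_bound (\<lambda>x. g x - \<nu>) x1 (C/2)"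
    using bound unfolding Re_sqrt_bound_def
  proof eventually_elim
    case (elim x)
    show ?case
    proof
      assume "x1 \<le> x"
      with elim \<open>x0 \<le> x1\<close> obtain dp where
        "((\<lambda>t. csqrt (g t)) has_vector_derivative dp) (at x)"
        "C + 1/2 * cmod (dp / csqrt (g x)) \<le> Re (csqrt (g x))"
        by auto
      with \<open>0 < C\<close> small[OF \<open>x1 \<le> x\<close>] show "\<exists>dp'.
          ((\<lambda>t. csqrt (g t - \<nu>)) has_vector_derivative dp') (at x) \<and>
          C/2 + 1/2 * cmod (dp' / csqrt (g x - \<nu>)) \<le> Re (csqrt (g x - \<nu>))"
        by (intro Re_sqrt_bound_diff_const_at)
    qed
  qed
  ultimately show ?thesis
    unfolding condA_altdef
    using \<open>0 < C\<close> \<open>x0 \<le> x1\<close> \<open>loc_integrable_Rplus g\<close> \<open>loc_abs_cont_from g x0\<close>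
    by (intro conjI loc_integrable_Rplus_diff_const loc_abs_cont_from_diff_const
        exI[of _ 0] exI[of _ "C/2"]) auto
qed

lemma open_setN: "open (setN q)"
  unfolding open_contains_ball
proof
  fix l
  assume "l \<in> setN q"
  then obtain x1 where "0 \<le> x1" and A: "condA (\<lambda>x. q x - l) x1"
    unfolding setN_def by auto
  from A obtain C where "0 < C" and bound: "Re_sqrt_bound (\<lambda>x. q x - l) x1 C"
    and lower: "\<And>x. x1 \<le> x \<Longrightarrow> C \<le> Re (csqrt (q x - l))"
    by (rule condA_obtains_bound) blast
  have "ball l (C^2/10) \<subseteq> setN q"
  proof
    fix m
    assume "m \<in> ball l (C^2/10)"
    then have "10 * cmod (m - l) \<le> C * C"
      by (simp add: dist_norm norm_minus_commute power2_eq_square)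
    also have "C * C \<le> C * cmod (csqrt (q x - l))" if "x1 \<le> x" for x
      using \<open>0 < C\<close>
      by (intro mult_left_mono order_trans[OF lower[OF that] complex_Re_le_cmod]) simp
    finally have "condA (\<lambda>x. q x - l - (m - l)) x1"
      using condA_diff_const[OF A bound \<open>0 < C\<close> order_refl] by blast
    with \<open>0 \<le> x1\<close> show "m \<in> setN q"
      unfolding setN_def by auto
  qed
  with \<open>0 < C\<close> show "\<exists>e>0. ball l e \<subseteq> setN q"
    by (intro exI[of _ "C^2/10"]) auto
qed

lemma setN_eq_UNIV_if_cmod_tendsto:
  assumes "0 \<le> x0" and A: "condA q x0" and lim: "filterlim (\<lambda>x. cmod (q x)) at_top at_top"
  shows "setN q = UNIV"
proof -
  obtain C where "0 < C" and bound: "Re_sqrt_bound q x0 C"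
    using A by (rule condA_obtains_bound)
  have "m \<in> setN q" for m
  proof -
    obtain N where N: "\<And>x. N \<le> x \<Longrightarrow> (10 * cmod m / C)^2 \<le> cmod (q x)"
      using lim unfolding filterlim_at_top eventually_at_top_linorder by blast
    have far: "10 * cmod m \<le> C * cmod (csqrt (q x))" if "max x0 N \<le> x" for x
    proof -
      have "10 * cmod m / C \<le> cmod (csqrt (q x))"
        using N[of x] that by (auto simp: norm_csqrt intro: real_le_rsqrt)
      with \<open>0 < C\<close> show ?thesis
        by (simp add: divide_le_eq mult.commute)
    qed
    have "condA (\<lambda>x. q x - m) (max x0 N)"
      by (rule condA_diff_const[OF A bound \<open>0 < C\<close> max.cobounded1 far])
    with \<open>0 \<le> x0\<close> show ?thesis
      unfolding setN_def by (intro CollectI exI[of _ "max x0 N"]) auto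
  qed
  then show ?thesis
    by blast
qed

lemma eventually_far_from_setN:
  assumes "l \<in> setN q"
  shows "\<exists>e>0. eventually (\<lambda>x. e \<le> cmod (q x - l)) at_top"
proof -
  obtain x1 where "condA (\<lambda>x. q x - l) x1"
    using assms unfolding setN_def by auto
  then obtain C where "0 < C" "Re_sqrt_bound (\<lambda>x. q x - l) x1 C"
    and lower: "\<And>x. x1 \<le> x \<Longrightarrow> C \<le> Re (csqrt (q x - l))"
    by (rule condA_obtains_bound) blast
  have "C^2 \<le> cmod (q x - l)" if "x1 \<le> x" for x
  proof -
    have "C \<le> cmod (csqrt (q x - l))"
      using lower[OF that] complex_Re_le_cmod order_trans by blast
    then have "C^2 \<le> (cmod (csqrt (q x - l)))^2"
      using \<open>0 < C\<close> by (intro power_mono) auto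
    then show ?thesis
      by (simp add: norm_csqrt)
  qed
  with \<open>0 < C\<close> show ?thesis
    by (intro exI[of _ "C^2"]) (auto simp: eventually_at_top_linorder)
qed

lemma cmod_tendsto_if_setN_eq_UNIV:
  assumes "setN q = UNIV"
  shows "filterlim (\<lambda>x. cmod (q x)) at_top at_top"
proof -
  have "\<forall>l. \<exists>e>0. eventually (\<lambda>x. e \<le> cmod (q x - l)) at_top"
    using assms by (intro allI eventually_far_from_setN) simp
  then have "\<exists>e. \<forall>l. 0 < e l \<and> eventually (\<lambda>x. e l \<le> cmod (q x - l)) at_top"
    by (rule choice)
  then obtain e where e: "\<forall>l. 0 < e l \<and> eventually (\<lambda>x. e l \<le> cmod (q x - l)) at_top"
    by blast
  then have e_pos: "\<And>l. 0 < e l" and far: "\<And>l. eventually (\<lambda>x. e l \<le> cmod (q x - l)) at_top"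
    by blast+
  show ?thesis
    unfolding filterlim_at_top
  proof
    fix Z :: real
    have "z \<in> ball z (e z)" for z
      using e_pos[of z] by simp
    then have "cball 0 Z \<subseteq> (\<Union>l\<in>UNIV. ball l (e l))"
      by blast
    then obtain L where "finite L" and cover: "cball 0 Z \<subseteq> (\<Union>l\<in>L. ball l (e l))"
      by (rule compactE_image[OF compact_cball open_ball]) blast
    have "eventually (\<lambda>x. \<forall>l\<in>L. e l \<le> cmod (q x - l)) at_top"
      using far by (intro eventually_ball_finite[OF \<open>finite L\<close>]) simp
    then show "eventually (\<lambda>x. Z \<le> cmod (q x)) at_top"
    proof eventually_elim
      case (elim x)
      show ?case
      proof (rule ccontr)
        assume "\<not> Z \<le> cmod (q x)"
        then have "q x \<in> cball 0 Z"
          by simp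
        with cover obtain l where "l \<in> L" "q x \<in> ball l (e l)"
          by blast
        then have "cmod (q x - l) < e l"
          by (simp add: dist_norm norm_minus_commute)
        moreover have "e l \<le> cmod (q x - l)"
          using elim \<open>l \<in> L\<close> by blast
        ultimately show False
          by linarith
      qed
    qed
  qed
qed

theorem lemma1:
  fixes q :: "real \<Rightarrow> complex" and x0 :: real
  assumes "x0 \<ge> 0" and "condA q x0"
  shows "0 \<in> setN q \<and> setN q \<noteq> {} \<and> open (setN q) \<and>
         (setN q = UNIV \<longleftrightarrow> filterlim (\<lambda>x. cmod (q x)) at_top at_top)"
proof -
  have "0 \<in> setN q"
    using assms unfolding setN_def by auto
  then show ?thesis
    using open_setN setN_eq_UNIV_if_cmod_tendsto[OF assms] cmod_tendsto_if_setN_eq_UNIV by blast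
qed

end
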